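(* Let $(x_n)_{n \in \mathbb{N}}$ be a sequence in $[0,1)$ with the following property: there exist $s \in \mathbb{N}$ and positive real numbers $K$ and $\gamma$ such that for infinitely many $N$ the point set $x_1, \ldots, x_N$ has a subset $x_{j_1}, \ldots, x_{j_M}$ with $M \geq \gamma N$ elements which is contained in some finite set of points of $[0,1)$ of cardinality at most $KN$ having at most $s$ different distances between neighbouring elements (gaps). Then $(x_n)_{n \in \mathbb{N}}$ does not have Poissonian pair correlations.
   Context: For real $x$, $\|x\|$ denotes the distance from $x$ to the nearest integer. A sequence $(x_n)_{n\in\mathbb{N}}$ in $[0,1)$ has Poissonian pair correlations if for every $s \geq 0$, $$F_N(s) := \frac{1}{N}\#\left\{1 \leq l \neq m \leq N : \|x_l - x_m\| \leq \frac{s}{N}\right\} \to 2s \quad (N\to\infty).$$ For a finite point set in $[0,1)$, the gaps are the distances between neighbouring elements, i.e. between consecutive points when the set is arranged in increasing order. *)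

theory Defs
  imports Complex_Main
begin

definition dist_int :: "real \<Rightarrow> real" where
  "dist_int t = \<bar>t - real_of_int (round t)\<bar>"

definition pair_corr :: "(nat \<Rightarrow> real) \<Rightarrow> nat \<Rightarrow> real \<Rightarrow> real" where
  "pair_corr x N s = (1 / real N) *
     real (card {(l, m). l \<in> {1..N} \<and> m \<in> {1..N} \<and> l \<noteq> m \<and>
                         dist_int (x l - x m) \<le> s / real N})"

definition poissonian_pair_corr :: "(nat \<Rightarrow> real) \<Rightarrow> bool" where
  "poissonian_pair_corr x \<longleftrightarrow>
     (\<forall>s::real. s \<ge> 0 \<longrightarrow> (\<lambda>N. pair_corr x N s) \<longlonglongrightarrow> 2 * s)"

definition gaps :: "real set \<Rightarrow> real set" where
  "gaps A = {b - a | a b. a \<in> A \<and> b \<in> A \<and> a < b \<and> \<not> (\<exists>c\<in>A. a < c \<and> c < b)}"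

end

theory Submission
  imports Defs
begin

text \<open>Suppose the pair correlations were Poissonian. Since F_N(t) - F_N(t - \<eta>) tends to at most
  2\<eta>, for large N no single distance d \<le> T/N is realised by 3\<eta>N or more ordered pairs.
  On the other hand, take N with a subset x_J of size at least \<gamma>N inside a set A of at most KN points
  with at most s gaps, and sort the values of x_J. Except for at most 1/c neighbours further apart
  than c = 4/(\<gamma>N) and at most |A|/(r+1) neighbours enclosing more than r = \<lceil>4K/\<gamma>\<rceil> points
  of A, neighbouring values differ by a sum of at most r gaps of A; together with the pairs of
  equal values this gives at least \<gamma>N/4 pairs with difference in [0, c] taking at most
  (r+1)(s+1)^r values. Some distance is therefore realised by \<gamma>N/(4(r+1)(s+1)^r) pairs,
  contradicting the first bound for \<eta> = \<gamma>/(16(r+1)(s+1)^r).\<close>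

fun gap_sums :: "real set \<Rightarrow> nat \<Rightarrow> real set" where
  "gap_sums G 0 = {0}"
| "gap_sums G (Suc k) = (\<lambda>(g, t). g + t) ` (G \<times> gap_sums G k)"

lemma finite_gap_sums: "finite G \<Longrightarrow> finite (gap_sums G k)"
  by (induction k) auto

lemma card_gap_sums_le: "finite G \<Longrightarrow> card (gap_sums G k) \<le> card G ^ k"
proof (induction k)
  case (Suc k)
  have "card (gap_sums G (Suc k)) \<le> card (G \<times> gap_sums G k)"
    unfolding gap_sums.simps by (rule card_image_le) (simp add: finite_gap_sums Suc.prems)
  also have "\<dots> \<le> card G * card G ^ k"
    using Suc by (simp add: card_cartesian_product)
  finally show ?case by simp
qed simp

lemma finite_gaps: "finite A \<Longrightarrow> finite (gaps A)"
proof -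
  assume "finite A"
  have "gaps A \<subseteq> (\<lambda>(a, b). b - a) ` (A \<times> A)" unfolding gaps_def by auto
  then show ?thesis using \<open>finite A\<close> by (simp add: finite_subset)
qed

lemma card_Union_gap_sums_le:
  assumes "finite A" "card (gaps A) \<le> s"
  shows "card (\<Union>k\<le>r. gap_sums (gaps A) k) \<le> Suc r * Suc s ^ r"
proof -
  have "card (\<Union>k\<le>r. gap_sums (gaps A) k) \<le> (\<Sum>k\<le>r. card (gap_sums (gaps A) k))"
    by (rule card_UN_le) simp
  also have "\<dots> \<le> (\<Sum>k\<le>r. Suc s ^ r)"
  proof (rule sum_mono)
    fix k assume "k \<in> {..r}"
    have "card (gap_sums (gaps A) k) \<le> card (gaps A) ^ k"
      using card_gap_sums_le finite_gaps assms(1) by blast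
    also have "\<dots> \<le> Suc s ^ k"
      using assms(2) by (simp add: power_mono)
    also have "\<dots> \<le> Suc s ^ r"
      using \<open>k \<in> {..r}\<close> by (simp add: power_increasing)
    finally show "card (gap_sums (gaps A) k) \<le> Suc s ^ r" .
  qed
  finally show ?thesis by simp
qed

text \<open>Walk from a to b through the points of A in between: every step is a gap of A.\<close>
lemma diff_in_gap_sums:
  assumes "finite A" "a \<in> A" "b \<in> A" "a \<le> b"
  shows "b - a \<in> gap_sums (gaps A) (card (A \<inter> {a<..b}))"
  using assms(2-4)
proof (induction "card (A \<inter> {a<..b})" arbitrary: a)
  case 0
  then have "a = b" using assms(1) by auto
  then show ?case by simp
next
  case (Suc n)
  define c where "c = Min (A \<inter> {a<..b})"
  have ne: "A \<inter> {a<..b} \<noteq> {}"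
    using Suc.hyps(2) by (metis card.empty nat.distinct(1))
  have c: "c \<in> A \<inter> {a<..b}"
    unfolding c_def using assms(1) ne by (intro Min_in) simp_all
  have c_min: "c \<le> e" if "e \<in> A \<inter> {a<..b}" for e
    unfolding c_def using assms(1) that by simp
  have "\<not> (\<exists>e\<in>A. a < e \<and> e < c)"
    using c c_min by force
  then have "c - a \<in> gaps A"
    unfolding gaps_def using c Suc.prems(1) by auto
  moreover have "A \<inter> {c<..b} = A \<inter> {a<..b} - {c}"
    using c c_min by force
  then have "card (A \<inter> {c<..b}) = n"
    using Suc.hyps(2) c assms(1) by (simp add: card_Diff_singleton)
  then have "b - c \<in> gap_sums (gaps A) n"
    using Suc.hyps(1)[of c] c assms(3) by auto
  ultimately have "(c - a) + (b - c) \<in> gap_sums (gaps A) (Suc n)"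
    by force
  then show ?case unfolding Suc.hyps(2)[symmetric] by simp
qed

lemma card_mult_le_sum:
  fixes f :: "'a \<Rightarrow> real"
  assumes "finite S" "\<And>i. i \<in> S \<Longrightarrow> 0 \<le> f i" "B \<subseteq> S" "\<And>i. i \<in> B \<Longrightarrow> c \<le> f i"
  shows "real (card B) * c \<le> sum f S"
proof -
  have "real (card B) * c = (\<Sum>i\<in>B. c)" by simp
  also have "\<dots> \<le> sum f B" using assms(4) by (rule sum_mono)
  also have "\<dots> \<le> sum f S" using assms(1-3) by (intro sum_mono2) auto
  finally show ?thesis .
qed

lemma card_long_steps_le:
  fixes w :: "real list"
  assumes "sorted w" "set w \<subseteq> {0..<1}"
  shows "real (card {i. Suc i < length w \<and> c < w!Suc i - w!i}) * c \<le> 1"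
proof -
  have "real (card {i. Suc i < length w \<and> c < w!Suc i - w!i}) * c
          \<le> (\<Sum>i<length w - 1. w!Suc i - w!i)"
    using sorted_nth_mono[OF assms(1)] by (intro card_mult_le_sum) auto
  also have "\<dots> = w!(length w - 1) - w!0"
    by (rule sum_lessThan_telescope)
  also have "\<dots> \<le> 1"
  proof (cases "w = []")
    case False
    then have "w!(length w - 1) \<in> set w" "w!0 \<in> set w"
      by simp_all
    then have "w!(length w - 1) \<in> {0..<1}" "w!0 \<in> {0..<1}"
      using assms(2) by blast+
    then show ?thesis by simp
  qed simp
  finally show ?thesis .
qed

lemma sum_card_between_steps_le:
  fixes w :: "'a::linorder list"
  assumes "sorted w" "finite A"
  shows "(\<Sum>i<length w - 1. card (A \<inter> {w!i<..w!Suc i})) \<le> card A"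
proof -
  have disj: "{w!i<..w!Suc i} \<inter> {w!j<..w!Suc j} = {}" if "i < j" "j < length w - 1" for i j
  proof -
    have "w!Suc i \<le> w!j"
      using sorted_nth_mono[OF assms(1), of "Suc i" j] that by simp
    then show ?thesis by auto
  qed
  then have "(A \<inter> {w!i<..w!Suc i}) \<inter> (A \<inter> {w!j<..w!Suc j}) = {}"
    if "i < length w - 1" "j < length w - 1" "i \<noteq> j" for i j
  proof (cases "i < j")
    case True
    then show ?thesis using disj[of i j] that by blast
  next
    case False
    then show ?thesis using disj[of j i] that by auto
  qed
  then have "(\<Sum>i<length w - 1. card (A \<inter> {w!i<..w!Suc i}))
               = card (\<Union>i<length w - 1. A \<inter> {w!i<..w!Suc i})"
    using assms(2) by (intro card_UN_disjoint[symmetric]) auto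
  also have "\<dots> \<le> card A"
    using assms(2) by (intro card_mono) auto
  finally show ?thesis .
qed

lemma card_good_steps_ge:
  fixes w :: "real list" and c :: real
  assumes "sorted w" "set w \<subseteq> {0..<1}" "finite A" "c > 0"
  shows "real (length w) - 1 - 1/c - real (card A) / real (Suc r)
           \<le> real (card {i. Suc i < length w \<and> w!Suc i - w!i \<le> c \<and> card (A \<inter> {w!i<..w!Suc i}) \<le> r})"
    (is "_ \<le> real (card ?good)")
proof -
  define long where "long = {i. Suc i < length w \<and> c < w!Suc i - w!i}"
  define crowded where "crowded = {i. Suc i < length w \<and> r < card (A \<inter> {w!i<..w!Suc i})}"
  have "{..<length w - 1} \<subseteq> ?good \<union> long \<union> crowded"
    by (auto simp: long_def crowded_def)
  moreover have "finite (?good \<union> long \<union> crowded)"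
    by (rule finite_subset[of _ "{..<length w}"]) (auto simp: long_def crowded_def)
  ultimately have "card {..<length w - 1} \<le> card (?good \<union> long \<union> crowded)"
    by (intro card_mono)
  then have "length w - 1 \<le> card (?good \<union> long \<union> crowded)"
    by simp
  also have "\<dots> \<le> card ?good + card long + card crowded"
    using card_Un_le[of "?good \<union> long" crowded] card_Un_le[of ?good long] by linarith
  finally have cover: "real (length w) - 1 \<le> card ?good + card long + card crowded"
    by linarith
  have "real (card long) * c \<le> 1"
    unfolding long_def using assms(1,2) by (rule card_long_steps_le)
  then have long: "real (card long) \<le> 1 / c"
    using assms(4) by (simp add: field_simps)
  have "real (card crowded) * real (Suc r) \<le> (\<Sum>i<length w - 1. real (card (A \<inter> {w!i<..w!Suc i})))"
    unfolding crowded_def by (intro card_mult_le_sum) auto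
  also have "\<dots> \<le> real (card A)"
    using sum_card_between_steps_le[OF assms(1,3)] by (metis of_nat_le_iff of_nat_sum)
  finally have crowded: "real (card crowded) \<le> real (card A) / real (Suc r)"
    by (simp add: field_simps)
  show ?thesis
    using cover long crowded by linarith
qed

lemma card_le_card_image_add_card_collisions:
  assumes "finite J"
  shows "card J \<le> card (x ` J) + card {(l, m). l \<in> J \<and> m \<in> J \<and> l \<noteq> m \<and> x l = x m}"
proof -
  define p where "p = inv_into J x"
  have p: "p (x l) \<in> J" "x (p (x l)) = x l" if "l \<in> J" for l
    using that by (simp_all add: p_def inv_into_into f_inv_into_f)
  have "card (p ` x ` J) = card (x ` J)"
    unfolding p_def by (intro card_image inj_on_inv_into) simp
  moreover have "p ` x ` J \<subseteq> J"
    using p(1) by blast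
  ultimately have card_J: "card J = card (J - p ` x ` J) + card (x ` J)"
    using assms card_image_le[OF assms, of x] by (simp add: card_Diff_subset finite_subset)
  have "(\<lambda>l. (l, p (x l))) ` (J - p ` x ` J) \<subseteq> {(l, m). l \<in> J \<and> m \<in> J \<and> l \<noteq> m \<and> x l = x m}"
    using p by force
  moreover have "inj_on (\<lambda>l. (l, p (x l))) (J - p ` x ` J)"
    by (rule inj_onI) simp
  moreover have "finite {(l, m). l \<in> J \<and> m \<in> J \<and> l \<noteq> m \<and> x l = x m}"
    by (rule finite_subset[of _ "J \<times> J"]) (use assms in auto)
  ultimately have "card (J - p ` x ` J) \<le> card {(l, m). l \<in> J \<and> m \<in> J \<and> l \<noteq> m \<and> x l = x m}"
    by (intro card_inj_on_le)
  then show ?thesis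
    using card_J by linarith
qed

lemma card_le_card_pairs_with_values:
  assumes "finite J" "inj_on a I" "\<And>i. i \<in> I \<Longrightarrow> a i \<in> x ` J \<and> b i \<in> x ` J \<and> a i \<noteq> b i"
  shows "card I \<le> card {(l, m). l \<in> J \<and> m \<in> J \<and> l \<noteq> m \<and> (\<exists>i\<in>I. x l = a i \<and> x m = b i)}"
proof -
  define p where "p = inv_into J x"
  have p: "p v \<in> J" "x (p v) = v" if "v \<in> x ` J" for v
    using that by (simp_all add: p_def inv_into_into f_inv_into_f)
  have "inj_on (\<lambda>i. (p (a i), p (b i))) I"
  proof (rule inj_onI)
    fix i j assume "i \<in> I" "j \<in> I" "(p (a i), p (b i)) = (p (a j), p (b j))"
    then have "x (p (a i)) = x (p (a j))" "a i \<in> x ` J" "a j \<in> x ` J"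
      using assms(3) by simp_all
    then have "a i = a j"
      using p(2) by metis
    then show "i = j"
      using assms(2) \<open>i \<in> I\<close> \<open>j \<in> I\<close> by (simp add: inj_on_eq_iff)
  qed
  moreover have "(\<lambda>i. (p (a i), p (b i))) ` I
      \<subseteq> {(l, m). l \<in> J \<and> m \<in> J \<and> l \<noteq> m \<and> (\<exists>i\<in>I. x l = a i \<and> x m = b i)}"
  proof
    fix q assume "q \<in> (\<lambda>i. (p (a i), p (b i))) ` I"
    then obtain i where "i \<in> I" "q = (p (a i), p (b i))"
      by blast
    moreover have "x (p (a i)) = a i" "x (p (b i)) = b i" "p (a i) \<in> J" "p (b i) \<in> J"
      using assms(3)[OF \<open>i \<in> I\<close>] p by simp_all
    ultimately show "q \<in> {(l, m). l \<in> J \<and> m \<in> J \<and> l \<noteq> m \<and> (\<exists>i\<in>I. x l = a i \<and> x m = b i)}"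
      using assms(3)[OF \<open>i \<in> I\<close>] by auto
  qed
  moreover have "finite {(l, m). l \<in> J \<and> m \<in> J \<and> l \<noteq> m \<and> (\<exists>i\<in>I. x l = a i \<and> x m = b i)}"
    by (rule finite_subset[of _ "J \<times> J"]) (use assms(1) in auto)
  ultimately show ?thesis
    by (rule card_inj_on_le)
qed

lemma card_add_card_le_card_pairs:
  fixes x :: "'a \<Rightarrow> 'b::linorder" and J :: "'a set"
  defines "w \<equiv> sorted_list_of_set (x ` J)"
  assumes "finite J" "I \<subseteq> {i. Suc i < length w}"
  shows "card J + card I \<le>
    card {(l, m). l \<in> J \<and> m \<in> J \<and> l \<noteq> m \<and> (x l = x m \<or> (\<exists>i\<in>I. x l = w!Suc i \<and> x m = w!i))}
      + length w"
    (is "_ \<le> card ?pairs + _")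
proof -
  let ?equal = "{(l, m). l \<in> J \<and> m \<in> J \<and> l \<noteq> m \<and> x l = x m}"
  let ?consecutive = "{(l, m). l \<in> J \<and> m \<in> J \<and> l \<noteq> m \<and> (\<exists>i\<in>I. x l = w!Suc i \<and> x m = w!i)}"
  have w: "length w = card (x ` J)" "set w = x ` J" "distinct w"
    using assms(2) by (simp_all add: w_def)
  have I: "Suc i < length w" if "i \<in> I" for i
    using assms(3) that by blast
  have "inj_on (\<lambda>i. w!Suc i) I"
    using I nth_eq_iff_index_eq[OF w(3)] by (auto simp: inj_on_def)
  moreover have "w!Suc i \<in> x ` J \<and> w!i \<in> x ` J \<and> w!Suc i \<noteq> w!i" if "i \<in> I" for i
    using I[OF that] w(2) nth_eq_iff_index_eq[OF w(3)] by (metis Suc_lessD n_not_Suc_n nth_mem)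
  ultimately have "card I \<le> card ?consecutive"
    using assms(2) by (intro card_le_card_pairs_with_values)
  moreover have "card J \<le> length w + card ?equal"
    unfolding w(1) using assms(2) by (rule card_le_card_image_add_card_collisions)
  moreover have "?equal \<inter> ?consecutive = {}"
    using I nth_eq_iff_index_eq[OF w(3)] by fastforce
  moreover have "finite ?equal" "finite ?consecutive"
    by (rule finite_subset[of _ "J \<times> J"], use assms(2) in auto)+
  ultimately have "card ?equal + card ?consecutive = card (?equal \<union> ?consecutive)"
    by (simp add: card_Un_disjoint)
  also have "?equal \<union> ?consecutive = ?pairs"
    by auto
  finally show ?thesis
    using \<open>card I \<le> card ?consecutive\<close> \<open>card J \<le> length w + card ?equal\<close> by linarith
qed

lemma card_short_differences_ge:
  fixes x :: "'a \<Rightarrow> real" and c :: real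
  assumes "finite J" "finite A" "A \<subseteq> {0..<1}" "x ` J \<subseteq> A" "c > 0"
  shows "real (card J) - 1 - 1/c - real (card A) / real (Suc r) \<le>
    real (card {(l, m). l \<in> J \<and> m \<in> J \<and> l \<noteq> m \<and> x l - x m \<in> (\<Union>k\<le>r. gap_sums (gaps A) k) \<inter> {0..c}})"
    (is "_ \<le> real (card ?short)")
proof -
  define w where "w = sorted_list_of_set (x ` J)"
  define I where "I = {i. Suc i < length w \<and> w!Suc i - w!i \<le> c \<and> card (A \<inter> {w!i<..w!Suc i}) \<le> r}"
  have w: "set w = x ` J" "sorted w"
    using assms(1) by (simp_all add: w_def)
  then have "real (length w) - 1 - 1/c - real (card A) / real (Suc r) \<le> real (card I)"
    unfolding I_def using assms(2-5) by (intro card_good_steps_ge) auto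
  moreover have "card J + card I \<le>
    card {(l, m). l \<in> J \<and> m \<in> J \<and> l \<noteq> m \<and> (x l = x m \<or> (\<exists>i\<in>I. x l = w!Suc i \<and> x m = w!i))}
      + length w"
    unfolding w_def using assms(1) by (rule card_add_card_le_card_pairs) (auto simp: I_def w_def)
  moreover have "card {(l, m). l \<in> J \<and> m \<in> J \<and> l \<noteq> m \<and> (x l = x m \<or> (\<exists>i\<in>I. x l = w!Suc i \<and> x m = w!i))}
      \<le> card ?short"
  proof (rule card_mono)
    show "finite ?short"
      by (rule finite_subset[of _ "J \<times> J"]) (use assms(1) in auto)
    have "w!Suc i - w!i \<in> (\<Union>k\<le>r. gap_sums (gaps A) k) \<inter> {0..c}" if "i \<in> I" for i
    proof -
      have i: "Suc i < length w" "w!Suc i - w!i \<le> c" "card (A \<inter> {w!i<..w!Suc i}) \<le> r"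
        using that by (simp_all add: I_def)
      then have "w!i \<in> A" "w!Suc i \<in> A" "w!i \<le> w!Suc i"
        using w assms(4) nth_mem[of i w] nth_mem[of "Suc i" w] sorted_nth_mono[OF w(2), of i "Suc i"]
        by auto
      then have "w!Suc i - w!i \<in> gap_sums (gaps A) (card (A \<inter> {w!i<..w!Suc i}))"
        using assms(2) by (intro diff_in_gap_sums)
      then show ?thesis
        using i(2,3) \<open>w!i \<le> w!Suc i\<close> by auto
    qed
    moreover have "(0::real) \<in> (\<Union>k\<le>r. gap_sums (gaps A) k) \<inter> {0..c}"
      using assms(5) by force
    ultimately show "{(l, m). l \<in> J \<and> m \<in> J \<and> l \<noteq> m \<and> (x l = x m \<or> (\<exists>i\<in>I. x l = w!Suc i \<and> x m = w!i))}
      \<subseteq> ?short"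
      by auto
  qed
  ultimately show ?thesis
    by linarith
qed

lemma exists_card_fiber_ge:
  assumes "finite P" "finite D" "D \<noteq> {}" "f ` P \<subseteq> D"
  shows "\<exists>d\<in>D. card P \<le> card D * card {p \<in> P. f p = d}"
proof (rule ccontr)
  assume "\<not> ?thesis"
  then have "card D * card {p \<in> P. f p = d} < card P" if "d \<in> D" for d
    using that by (simp add: not_le)
  then have "(\<Sum>d\<in>D. card D * card {p \<in> P. f p = d}) < (\<Sum>d\<in>D. card P)"
    using assms(2,3) by (intro sum_strict_mono) auto
  moreover have "(\<Sum>d\<in>D. card {p \<in> P. f p = d}) = card P"
    using sum.group[OF assms(1,2,4), of "\<lambda>_. 1::nat"] by simp
  ultimately show False
    by (simp add: sum_distrib_left[symmetric])
qed

lemma dist_int_eq_self: "0 \<le> t \<Longrightarrow> t < 1/2 \<Longrightarrow> dist_int t = t"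
  unfolding dist_int_def using round_unique'[of t 0] by simp

definition pairs_at_distance :: "(nat \<Rightarrow> real) \<Rightarrow> nat \<Rightarrow> real \<Rightarrow> (nat \<times> nat) set" where
  "pairs_at_distance x N d = {(l, m). l \<in> {1..N} \<and> m \<in> {1..N} \<and> l \<noteq> m \<and> dist_int (x l - x m) = d}"

lemma finite_pairs_at_distance: "finite (pairs_at_distance x N d)"
  by (rule finite_subset[of _ "{1..N} \<times> {1..N}"]) (auto simp: pairs_at_distance_def)

lemma exists_popular_distance:
  fixes x :: "nat \<Rightarrow> real" and c :: real
  assumes "J \<subseteq> {1..N}" "finite A" "A \<subseteq> {0..<1}" "x ` J \<subseteq> A" "card (gaps A) \<le> s" "0 < c" "c < 1/2"
  shows "\<exists>d\<in>{0..c}. real (card J) - 1 - 1/c - real (card A) / real (Suc r) \<le>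
    real (Suc r * Suc s ^ r) * real (card (pairs_at_distance x N d))"
proof -
  define D where "D = (\<Union>k\<le>r. gap_sums (gaps A) k) \<inter> {0..c}"
  define P where "P = {(l, m). l \<in> J \<and> m \<in> J \<and> l \<noteq> m \<and> x l - x m \<in> D}"
  have "card D \<le> card (\<Union>k\<le>r. gap_sums (gaps A) k)"
    unfolding D_def by (intro card_mono) (simp_all add: finite_gap_sums finite_gaps assms(2))
  then have card_D: "card D \<le> Suc r * Suc s ^ r"
    using card_Union_gap_sums_le[OF assms(2,5), of r] by linarith
  have "finite D"
    unfolding D_def using assms(2) by (simp add: finite_gap_sums finite_gaps)
  moreover have "0 \<in> D"
    unfolding D_def using assms(6) by force
  moreover have "finite P"
    by (rule finite_subset[of _ "{1..N} \<times> {1..N}"]) (use assms(1) in \<open>auto simp: P_def\<close>)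
  moreover have "(\<lambda>(l, m). x l - x m) ` P \<subseteq> D"
    by (auto simp: P_def)
  ultimately obtain d where "d \<in> D" and
    fiber: "card P \<le> card D * card {q \<in> P. (\<lambda>(l, m). x l - x m) q = d}"
    using exists_card_fiber_ge[of P D "\<lambda>(l, m). x l - x m"] by blast
  then have d: "d \<in> {0..c}"
    by (simp add: D_def)
  have "{q \<in> P. (\<lambda>(l, m). x l - x m) q = d} \<subseteq> pairs_at_distance x N d"
    using assms(1,7) d dist_int_eq_self by (auto simp: P_def pairs_at_distance_def)
  then have "card {q \<in> P. (\<lambda>(l, m). x l - x m) q = d} \<le> card (pairs_at_distance x N d)"
    by (intro card_mono finite_pairs_at_distance)
  with fiber card_D have "card P \<le> Suc r * Suc s ^ r * card (pairs_at_distance x N d)"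
    by (meson le_trans mult_le_mono)
  then have "real (card P) \<le> real (Suc r * Suc s ^ r) * real (card (pairs_at_distance x N d))"
    unfolding of_nat_mult[symmetric] of_nat_le_iff .
  moreover have "real (card J) - 1 - 1/c - real (card A) / real (Suc r) \<le> real (card P)"
    unfolding P_def D_def using finite_subset[OF assms(1)] assms(2-4,6)
    by (intro card_short_differences_ge) simp_all
  ultimately show ?thesis
    using d order_trans by blast
qed

lemma exists_distance_with_many_pairs:
  fixes x :: "nat \<Rightarrow> real"
  assumes "J \<subseteq> {1..N}" "\<gamma> * real N \<le> real (card J)"
    and "finite A" "A \<subseteq> {0..<1}" "real (card A) \<le> K * real N" "x ` J \<subseteq> A" "card (gaps A) \<le> s"
    and "0 < \<gamma>" "8 < \<gamma> * real N"
  defines "r \<equiv> nat \<lceil>4 * K / \<gamma>\<rceil>"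
  shows "\<exists>d\<in>{0..4 / (\<gamma> * real N)}.
    \<gamma> * real N / 4 \<le> real (Suc r * Suc s ^ r) * real (card (pairs_at_distance x N d))"
proof -
  define c where "c = 4 / (\<gamma> * real N)"
  have c: "0 < c" "c < 1/2" "1 / c = \<gamma> * real N / 4"
    using assms(9) by (simp_all add: c_def field_simps)
  have "4 * K / \<gamma> \<le> real (Suc r)"
    unfolding r_def by linarith
  then have "4 * K * real N \<le> \<gamma> * real (Suc r) * real N"
    using assms(8) by (intro mult_right_mono) (simp_all add: field_simps)
  then have "real (card A) / real (Suc r) \<le> \<gamma> * real N / 4"
    using assms(5) by (simp add: field_simps)
  then have "\<gamma> * real N / 4 \<le> real (card J) - 1 - 1/c - real (card A) / real (Suc r)"
    using assms(2,9) c(3) by linarith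
  then show ?thesis
    using exists_popular_distance[OF assms(1,3,4,6,7) c(1,2), of r] unfolding c_def
    by (meson order_trans)
qed

lemma pair_corr_eq_0_if_neg: "s < 0 \<Longrightarrow> pair_corr x N s = 0"
proof (cases "N = 0")
  case False
  moreover assume "s < 0"
  ultimately have "s / real N < dist_int t" for t
    using divide_neg_pos[of s "real N"] by (simp add: dist_int_def)
  then have empty: "{(l, m). l \<in> {1..N} \<and> m \<in> {1..N} \<and> l \<noteq> m \<and> dist_int (x l - x m) \<le> s / real N} = {}"
    by (auto simp: not_le)
  show ?thesis
    unfolding pair_corr_def empty by simp
qed (simp add: pair_corr_def)

lemma pair_corr_increment_eventually_less:
  assumes "poissonian_pair_corr x" "\<eta> > 0" "t \<ge> 0"
  shows "\<forall>\<^sub>F N in sequentially. pair_corr x N t - pair_corr x N (t - \<eta>) < 3 * \<eta>"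
proof -
  have lim: "(\<lambda>N. pair_corr x N u) \<longlonglongrightarrow> 2 * u" if "u \<ge> 0" for u
    using assms(1) that unfolding poissonian_pair_corr_def by blast
  show ?thesis
  proof (cases "\<eta> \<le> t")
    case True
    then have "(\<lambda>N. pair_corr x N t - pair_corr x N (t - \<eta>)) \<longlonglongrightarrow> 2 * t - 2 * (t - \<eta>)"
      using assms(3) by (intro tendsto_diff lim) auto
    then show ?thesis
      by (rule order_tendstoD(2)) (use assms(2) in simp)
  next
    case False
    then have "(\<lambda>N. pair_corr x N t - pair_corr x N (t - \<eta>)) \<longlonglongrightarrow> 2 * t"
      using lim[OF assms(3)] by (simp add: pair_corr_eq_0_if_neg)
    then show ?thesis
      by (rule order_tendstoD(2)) (use False assms(2) in linarith)
  qed
qed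

lemma card_pairs_at_distance_le:
  assumes "N > 0" "t' < real N * d" "real N * d \<le> t"
  shows "real (card (pairs_at_distance x N d))
           \<le> real N * (pair_corr x N t - pair_corr x N t')"
proof -
  define close where
    "close u = {(l, m). l \<in> {1..N} \<and> m \<in> {1..N} \<and> l \<noteq> m \<and> dist_int (x l - x m) \<le> u / real N}" for u
  have finite: "finite (close u)" for u
    by (rule finite_subset[of _ "{1..N} \<times> {1..N}"]) (auto simp: close_def)
  have pair_corr: "real N * pair_corr x N u = real (card (close u))" for u
    using assms(1) by (simp add: pair_corr_def close_def)
  have "t' / real N \<le> t / real N"
    using assms by (simp add: divide_right_mono)
  then have "close t' \<subseteq> close t"
    by (auto simp: close_def)
  then have "card (close t - close t') = card (close t) - card (close t')"
    using finite by (simp add: card_Diff_subset)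
  moreover have "card (close t') \<le> card (close t)"
    using finite \<open>close t' \<subseteq> close t\<close> by (simp add: card_mono)
  moreover have "pairs_at_distance x N d \<subseteq> close t - close t'"
    using assms by (auto simp: close_def pairs_at_distance_def field_simps)
  then have "card (pairs_at_distance x N d) \<le> card (close t - close t')"
    using finite by (simp add: card_mono)
  ultimately show ?thesis
    using pair_corr[of t] pair_corr[of t'] by (simp add: right_diff_distrib)
qed

lemma few_pairs_at_each_distance:
  assumes "poissonian_pair_corr x" "\<eta> > 0" "T \<ge> 0"
  shows "\<forall>\<^sub>F N in sequentially. \<forall>d\<in>{0..T / real N}.
    real (card (pairs_at_distance x N d)) < 3 * \<eta> * real N"
proof -
  have "\<forall>\<^sub>F N in sequentially. \<forall>k\<in>{..nat \<lceil>T / \<eta>\<rceil>}.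
          pair_corr x N (real k * \<eta>) - pair_corr x N (real k * \<eta> - \<eta>) < 3 * \<eta>"
    using assms by (intro eventually_ball_finite ballI pair_corr_increment_eventually_less) auto
  moreover have "\<forall>\<^sub>F N in sequentially. N > 0"
    by (rule eventually_gt_at_top)
  ultimately show ?thesis
  proof eventually_elim
    case (elim N)
    show ?case
    proof
      fix d assume d: "d \<in> {0..T / real N}"
      define k where "k = nat \<lceil>real N * d / \<eta>\<rceil>"
      have "real N * d / \<eta> \<ge> 0"
        using d assms(2) by simp
      then have "real k - 1 < real N * d / \<eta>" "real N * d / \<eta> \<le> real k"
        unfolding k_def by linarith+
      then have k: "real k * \<eta> - \<eta> < real N * d" "real N * d \<le> real k * \<eta>"
        using assms(2) by (simp_all add: field_simps)
      have "real N * d / \<eta> \<le> T / \<eta>"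
        using d elim(2) assms(2) by (simp add: divide_right_mono field_simps)
      then have "k \<le> nat \<lceil>T / \<eta>\<rceil>"
        unfolding k_def by (intro nat_mono ceiling_mono)
      then have "real N * (pair_corr x N (real k * \<eta>) - pair_corr x N (real k * \<eta> - \<eta>)) < real N * (3 * \<eta>)"
        using elim by simp
      then show "real (card (pairs_at_distance x N d)) < 3 * \<eta> * real N"
        using card_pairs_at_distance_le[OF elim(2) k, where x = x] by (simp add: mult.commute)
    qed
  qed
qed

lemma ex_in_infinite_set_eventually:
  fixes S :: "nat set"
  assumes "infinite S" "\<forall>\<^sub>F n in sequentially. P n"
  shows "\<exists>n\<in>S. P n"
proof -
  obtain n0 where "\<And>n. n \<ge> n0 \<Longrightarrow> P n"
    using assms(2) unfolding eventually_sequentially by blast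
  moreover obtain n where "n \<in> S" "\<not> n \<le> n0"
    using assms(1) unfolding finite_nat_set_iff_bounded_le by blast
  ultimately show ?thesis
    using nat_le_linear by blast
qed

theorem theorem1:
  fixes x :: "nat \<Rightarrow> real" and s :: nat and K \<gamma> :: real
  assumes range: "\<forall>n\<ge>1. x n \<in> {0..<1}"
    and K_pos: "K > 0" and gamma_pos: "\<gamma> > 0"
    and inf: "infinite {N::nat. \<exists>J A. J \<subseteq> {1..N} \<and> real (card J) \<ge> \<gamma> * real N \<and>
                 finite A \<and> A \<subseteq> {0..<1} \<and> real (card A) \<le> K * real N \<and>
                 x ` J \<subseteq> A \<and> card (gaps A) \<le> s}"
  shows "\<not> poissonian_pair_corr x"
proof
  assume poissonian: "poissonian_pair_corr x"
  define r where "r = nat \<lceil>4 * K / \<gamma>\<rceil>"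
  define Q where "Q = Suc r * Suc s ^ r"
  have "real Q > 0"
    unfolding Q_def by (simp only: of_nat_0_less_iff) simp
  define \<eta> where "\<eta> = \<gamma> / (16 * real Q)"
  have eventually_few: "\<forall>\<^sub>F N in sequentially. \<forall>d\<in>{0..(4 / \<gamma>) / real N}.
           real (card (pairs_at_distance x N d)) < 3 * \<eta> * real N"
    using gamma_pos \<open>real Q > 0\<close> unfolding \<eta>_def by (intro few_pairs_at_each_distance[OF poissonian]) simp_all
  have eventually_large: "\<forall>\<^sub>F N in sequentially. 8 / \<gamma> < real N"
    by (rule eventually_mono[OF eventually_gt_at_top[of "nat \<lceil>8 / \<gamma>\<rceil>"]]) linarith
  obtain N J A where
    J: "J \<subseteq> {1..N}" "real (card J) \<ge> \<gamma> * real N"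
    and A: "finite A" "A \<subseteq> {0..<1}" "real (card A) \<le> K * real N" "x ` J \<subseteq> A" "card (gaps A) \<le> s"
    and few: "\<forall>d\<in>{0..4 / (\<gamma> * real N)}. real (card (pairs_at_distance x N d)) < 3 * \<eta> * real N"
    and N: "8 / \<gamma> < real N"
    using ex_in_infinite_set_eventually[OF inf eventually_conj[OF eventually_few eventually_large]] by auto
  have "8 < \<gamma> * real N"
    using N gamma_pos by (simp add: field_simps)
  then obtain d where "d \<in> {0..4 / (\<gamma> * real N)}"
    and many: "\<gamma> * real N / 4 \<le> real Q * real (card (pairs_at_distance x N d))"
    using exists_distance_with_many_pairs[OF J(1,2) A gamma_pos] unfolding Q_def r_def by blast
  then have "real (card (pairs_at_distance x N d)) < 3 * \<eta> * real N"
    using few by blast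
  then have "real Q * real (card (pairs_at_distance x N d)) < real Q * (3 * \<eta> * real N)"
    using \<open>real Q > 0\<close> by simp
  also have "\<dots> = 3 * (\<gamma> * real N) / 16"
    unfolding \<eta>_def using \<open>real Q > 0\<close> by (simp add: field_simps)
  finally show False
    using many \<open>8 < \<gamma> * real N\<close> by linarith
qed

end
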